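(* Let $a,b,c,d\ge1$ be integers and let $$M=\begin{bmatrix}a&-1&-1&-1\\-1&b&-1&-1\\-1&-1&c&-1\\-1&-1&-1&d\end{bmatrix}.$$ If $\det M=0$ and two of $a,b,c,d$ equal $7$, then the other two are $1$ and $3$ (in some order). *)

theory Defs
  imports "HOL-Analysis.Analysis"
begin

definition Mmat :: "int \<Rightarrow> int \<Rightarrow> int \<Rightarrow> int \<Rightarrow> real^4^4" where
  "Mmat a b c d = vector [
     vector [real_of_int a, -1, -1, -1],
     vector [-1, real_of_int b, -1, -1],
     vector [-1, -1, real_of_int c, -1],
     vector [-1, -1, -1, real_of_int d]]"

end

theory Submission
  imports Defs
begin

text \<open>With \<open>x\<^sub>i = a\<^sub>i + 1\<close> the matrix is \<open>diag x - J\<close> (\<open>J\<close> the all-ones matrix), so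
  \<open>det M = x\<^sub>1 x\<^sub>2 x\<^sub>3 x\<^sub>4 (1 - \<Sum>1/x\<^sub>i)\<close> and \<open>det M = 0\<close> says that the unit fractions
  \<open>1/x\<^sub>i\<close> sum to \<open>1\<close>. Two sevens contribute \<open>1/8 + 1/8\<close>, so the other two entries
  \<open>c, d\<close> satisfy \<open>1/(c+1) + 1/(d+1) = 3/4\<close>, i.e. \<open>3cd = c + d + 5\<close>. For \<open>c \<ge> 4\<close> the
  left side already exceeds the right, so \<open>c, d \<le> 3\<close> and \<open>{c, d} = {1, 3}\<close>.\<close>

lemma vector_4_nth [simp]:
  "(vector [x, y, z, w] :: 'a::zero^4) $ 1 = x"
  "(vector [x, y, z, w] :: 'a::zero^4) $ 2 = y"
  "(vector [x, y, z, w] :: 'a::zero^4) $ 3 = z"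
  "(vector [x, y, z, w] :: 'a::zero^4) $ 4 = w"
  unfolding vector_def by simp_all

lemma det_Mmat:
  "det (Mmat a b c d) = of_int ((a+1)*(b+1)*(c+1)*(d+1)
     - (b+1)*(c+1)*(d+1) - (a+1)*(c+1)*(d+1) - (a+1)*(b+1)*(d+1) - (a+1)*(b+1)*(c+1))"
proof -
  have "finite {2::4, 3, 4}" "1 \<notin> {2::4, 3, 4}"
    and "finite {3::4, 4}" "2 \<notin> {3::4, 4}"
    and "finite {4::4}" "3 \<notin> {4::4}"
    by auto
  note insert_perms = sum_over_permutations_insert[OF this(1,2)]
    sum_over_permutations_insert[OF this(3,4)] sum_over_permutations_insert[OF this(5,6)]
  show ?thesis
    unfolding det_def UNIV_4 insert_perms permutes_sing
    by (simp add: sign_swap_id permutation_swap_id permutation_compose sign_compose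
        swap_id_eq Mmat_def) (simp add: algebra_simps)
qed

lemma det_Mmat_eq_0_iff:
  assumes "a \<noteq> -1" "b \<noteq> -1" "c \<noteq> -1" "d \<noteq> -1"
  shows "det (Mmat a b c d) = 0 \<longleftrightarrow>
    1 / (of_int a + 1) + 1 / (of_int b + 1) + 1 / (of_int c + 1) + 1 / (of_int d + 1) = (1::real)"
proof -
  define A B C D where "A = real_of_int a + 1" and "B = real_of_int b + 1"
    and "C = real_of_int c + 1" and "D = real_of_int d + 1"
  have nonzero: "A \<noteq> 0" "B \<noteq> 0" "C \<noteq> 0" "D \<noteq> 0"
    using assms unfolding A_def B_def C_def D_def by linarith+
  have "det (Mmat a b c d) = A * B * C * D - B * C * D - A * C * D - A * B * D - A * B * C"
    unfolding det_Mmat A_def B_def C_def D_def by simp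
  also have "\<dots> = A * B * C * D * (1 - (1 / A + 1 / B + 1 / C + 1 / D))"
    using nonzero by (simp add: field_simps)
  finally show ?thesis
    using nonzero by (simp flip: A_def B_def C_def D_def)
qed

lemma solution_3cd_bound:
  fixes c d :: int
  assumes "c \<ge> 1" "d \<ge> 1" "3 * c * d = c + d + 5"
  shows "c \<le> 3"
proof (rule ccontr)
  assume "\<not> c \<le> 3"
  then have "c * (3 * d - 1) \<ge> 4 * (3 * d - 1)"
    using assms by (intro mult_right_mono) auto
  then show False
    using assms by (simp add: algebra_simps)
qed

lemma solutions_3cd:
  fixes c d :: int
  assumes "c \<ge> 1" "d \<ge> 1" "3 * c * d = c + d + 5"
  shows "{c, d} = {1, 3}"
proof -
  have "c \<le> 3" "d \<le> 3"
    using solution_3cd_bound[of c d] solution_3cd_bound[of d c] assms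
    by (simp_all add: ac_simps)
  then have "c \<in> {1, 2, 3}" "d \<in> {1, 2, 3}"
    using assms by auto
  then show ?thesis
    using assms(3) by auto
qed

lemma unit_fractions_three_quarters:
  fixes c d :: int
  assumes "c \<ge> 1" "d \<ge> 1" "1 / (of_int c + 1) + 1 / (of_int d + 1) = (3 / 4 :: real)"
  shows "{c, d} = {1, 3}"
proof -
  define C D where "C = real_of_int c + 1" and "D = real_of_int d + 1"
  have "C \<noteq> 0" "D \<noteq> 0"
    using assms(1,2) unfolding C_def D_def by linarith+
  moreover have "1 / C + 1 / D = 3 / 4"
    using assms(3) unfolding C_def D_def .
  ultimately have "4 * (C + D) = 3 * C * D"
    by (simp add: field_simps)
  then have "real_of_int (3 * c * d) = real_of_int (c + d + 5)"
    unfolding C_def D_def by (simp add: algebra_simps)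
  then have "3 * c * d = c + d + 5"
    by (simp only: of_int_eq_iff)
  then show ?thesis
    using assms(1,2) solutions_3cd by blast
qed

theorem lemma3p8:
  fixes a b c d :: int
  assumes "a \<ge> 1" "b \<ge> 1" "c \<ge> 1" "d \<ge> 1"
    and "det (Mmat a b c d) = 0"
  shows "(a = 7 \<and> b = 7 \<longrightarrow> {c, d} = {1, 3}) \<and>
         (a = 7 \<and> c = 7 \<longrightarrow> {b, d} = {1, 3}) \<and>
         (a = 7 \<and> d = 7 \<longrightarrow> {b, c} = {1, 3}) \<and>
         (b = 7 \<and> c = 7 \<longrightarrow> {a, d} = {1, 3}) \<and>
         (b = 7 \<and> d = 7 \<longrightarrow> {a, c} = {1, 3}) \<and>
         (c = 7 \<and> d = 7 \<longrightarrow> {a, b} = {1, 3})"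
proof -
  have unit_sum: "1 / (of_int a + 1) + 1 / (of_int b + 1) + 1 / (of_int c + 1) + 1 / (of_int d + 1) = (1::real)"
    using assms det_Mmat_eq_0_iff by simp
  have remaining: "{x, y} = {1, 3}"
    if "x \<ge> 1" "y \<ge> 1" "1 / 8 + 1 / 8 + 1 / (of_int x + 1) + 1 / (of_int y + 1) = (1::real)" for x y :: int
    using that by (intro unit_fractions_three_quarters) auto
  show ?thesis
    by (intro conjI impI; elim conjE; rule remaining)
      (use unit_sum assms(1-4) in \<open>simp_all add: ac_simps\<close>)
qed

end
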